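(* For either choice $\zeta\in\{q,-q^3\}$, the function $\mathcal{F}(\lambda_1,\dots,\lambda_{L-1}\mid v_1,v_2)=\langle\bar0|\mathcal{E}(\lambda_{L-1})\cdots\mathcal{E}(\lambda_1)\mathcal{B}(v_2)\mathcal{B}(v_1)|0\rangle$ vanishes whenever $y_1=e^{2v_1}=e^{2\mu_j}\zeta$ for some $1\le j\le L$.
   Context: Let $q\in\mathbb{C}\setminus\{0\}$ (with a fixed choice of $q^{1/2}$) and $\zeta\in\{q,-q^3\}$ ($\zeta=q$: Fateev–Zamolodchikov model; $\zeta=-q^3$: Izergin–Korepin model). For $\lambda\in\mathbb{C}$ put $x=e^{2\lambda}$ and define $a(\lambda)=(x-\zeta)(x-q^2)$, $b(\lambda)=q(x-1)(x-\zeta)$, $c(\lambda)=(1-q^2)(x-\zeta)$, $\bar c(\lambda)=x(1-q^2)(x-\zeta)$, and for $\alpha,\beta\in\{1,2,3\}$, with $\beta'=4-\beta$: $d_{\alpha,\beta}(\lambda)=q(x-1)(x-\zeta)+x(q^2-1)(\zeta-1)$ if $\alpha=\beta=2$; $d_{\alpha,\beta}(\lambda)=(x-1)[(x-\zeta)+x(q^2-1)]$ if $\alpha=\beta\neq 2$; $d_{\alpha,\beta}(\lambda)=(q^2-1)[\zeta(x-1)q^{(\alpha-\beta)/2}-\delta_{\alpha,\beta'}(x-\zeta)]$ if $\alpha<\beta$; $d_{\alpha,\beta}(\lambda)=x(q^2-1)[(x-1)q^{(\alpha-\beta)/2}-\delta_{\alpha,\beta'}(x-\zeta)]$ if $\alpha>\beta$.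 Let $e_1,e_2,e_3$ be the standard basis of $\mathbb{C}^3$ and $E_{\alpha,\beta}$ the unit matrices. Define $\mathcal{R}(\lambda)\in\mathrm{End}(\mathbb{C}^3\otimes\mathbb{C}^3)$ as the $9\times 9$ matrix in the ordered basis $e_1\otimes e_1,e_1\otimes e_2,e_1\otimes e_3,e_2\otimes e_1,e_2\otimes e_2,e_2\otimes e_3,e_3\otimes e_1,e_3\otimes e_2,e_3\otimes e_3$ (indices $1,\dots,9$) whose only nonzero entries (row, column) are: $(1,1)=a$; $(2,2)=b$, $(2,4)=c$; $(3,3)=d_{1,1}$, $(3,5)=d_{1,2}$, $(3,7)=d_{1,3}$; $(4,2)=\bar c$, $(4,4)=b$; $(5,3)=d_{2,1}$, $(5,5)=d_{2,2}$, $(5,7)=d_{2,3}$; $(6,6)=b$, $(6,8)=c$; $(7,3)=d_{3,1}$, $(7,5)=d_{3,2}$, $(7,7)=d_{3,3}$; $(8,6)=\bar c$, $(8,8)=b$; $(9,9)=a$ (all evaluated at $\lambda$). Fix $L\ge1$ and inhomogeneities $\mu_1,\dots,\mu_L\in\mathbb{C}$. With $V_a=V_1=\dots=V_L=\mathbb{C}^3$, let $\mathcal{T}(\lambda)=\mathcal{R}_{a1}(\lambda-\mu_1)\cdots\mathcal{R}_{aL}(\lambda-\mu_L)$, where $\mathcal{R}_{aj}$ acts as $\mathcal{R}$ on $V_a\otimes V_j$. Write $\mathcal{T}(\lambda)=\sum_{\alpha,\beta}E_{\alpha,\beta}\otimes\mathcal{T}_\alpha^\beta(\lambda)$ and set $\mathcal{B}(\lambda)=\mathcal{T}_1^2(\lambda)$,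 $\mathcal{E}(\lambda)=\mathcal{T}_1^3(\lambda)$, operators on $V_1\otimes\cdots\otimes V_L$. Let $|0\rangle=e_1^{\otimes L}$ and let $\langle\bar0|$ be the dual vector of $e_3^{\otimes L}$. *)

theory Defs
  imports Complex_Main
begin

text \<open>Parameters: q (nonzero), s a fixed square root of q (s^2 = q), zeta.
  Spectral parameter lam; x = exp(2 lam).\<close>

definition d_wt :: "complex \<Rightarrow> complex \<Rightarrow> complex \<Rightarrow> complex \<Rightarrow> nat \<Rightarrow> nat \<Rightarrow> complex" where
  "d_wt q s \<zeta> x \<alpha> \<beta> =
    (let \<delta> = (if \<alpha> = 4 - \<beta> then 1 else 0) in
     if \<alpha> = \<beta> \<and> \<alpha> = 2 then q*(x-1)*(x-\<zeta>) + x*(q^2-1)*(\<zeta>-1)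
     else if \<alpha> = \<beta> then (x-1)*((x-\<zeta>) + x*(q^2-1))
     else if \<alpha> < \<beta> then (q^2-1)*(\<zeta>*(x-1)*(s powi (int \<alpha> - int \<beta>)) - \<delta>*(x-\<zeta>))
     else x*(q^2-1)*((x-1)*(s powi (int \<alpha> - int \<beta>)) - \<delta>*(x-\<zeta>)))"

definition Rmat :: "complex \<Rightarrow> complex \<Rightarrow> complex \<Rightarrow> complex \<Rightarrow> nat \<Rightarrow> nat \<Rightarrow> complex" where
  "Rmat q s \<zeta> lam r c =
    (let x = exp (2*lam);
         a = (x-\<zeta>)*(x-q^2);
         b = q*(x-1)*(x-\<zeta>);
         cc = (1-q^2)*(x-\<zeta>);
         cb = x*(1-q^2)*(x-\<zeta>);
         d = d_wt q s \<zeta> x in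
     if (r,c) = (1,1) then a
     else if (r,c) = (2,2) then b
     else if (r,c) = (2,4) then cc
     else if (r,c) = (3,3) then d 1 1
     else if (r,c) = (3,5) then d 1 2
     else if (r,c) = (3,7) then d 1 3
     else if (r,c) = (4,2) then cb
     else if (r,c) = (4,4) then b
     else if (r,c) = (5,3) then d 2 1
     else if (r,c) = (5,5) then d 2 2
     else if (r,c) = (5,7) then d 2 3
     else if (r,c) = (6,6) then b
     else if (r,c) = (6,8) then cc
     else if (r,c) = (7,3) then d 3 1
     else if (r,c) = (7,5) then d 3 2
     else if (r,c) = (7,7) then d 3 3
     else if (r,c) = (8,6) then cb
     else if (r,c) = (8,8) then b
     else if (r,c) = (9,9) then a
     else 0)"

text \<open>Entry of R on V_a \<otimes> V_j: row e_\<alpha>\<otimes>e_i, column e_\<beta>\<otimes>e_k (all indices in 1..3).\<close>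
definition Rent :: "complex \<Rightarrow> complex \<Rightarrow> complex \<Rightarrow> complex \<Rightarrow> nat \<Rightarrow> nat \<Rightarrow> nat \<Rightarrow> nat \<Rightarrow> complex" where
  "Rent q s \<zeta> lam \<alpha> i \<beta> k = Rmat q s \<zeta> lam (3*(\<alpha>-1)+i) (3*(\<beta>-1)+k)"

text \<open>Matrix element of the monodromy component T_\<alpha>^\<beta>(lam) =
  (auxiliary block \<alpha>,\<beta> of) R_{a1}(lam-mu_1)...R_{aL}(lam-mu_L), between quantum basis
  states e_is (row) and e_ks (column), given the list of inhomogeneities.\<close>
fun mono :: "complex \<Rightarrow> complex \<Rightarrow> complex \<Rightarrow> complex \<Rightarrow> complex list \<Rightarrow> nat \<Rightarrow> nat \<Rightarrow> nat list \<Rightarrow> nat list \<Rightarrow> complex" where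
  "mono q s \<zeta> lam [] \<alpha> \<beta> [] [] = (if \<alpha> = \<beta> then 1 else 0)"
| "mono q s \<zeta> lam (m # ms) \<alpha> \<beta> (i # is) (k # ks) =
     (\<Sum>\<gamma>\<in>{1,2,3}. Rent q s \<zeta> (lam - m) \<alpha> i \<gamma> k * mono q s \<zeta> lam ms \<gamma> \<beta> is ks)"
| "mono q s \<zeta> lam _ \<alpha> \<beta> _ _ = 0"

text \<open>Basis configurations of V_1 \<otimes> ... \<otimes> V_L.\<close>
definition configs :: "nat \<Rightarrow> nat list set" where
  "configs L = {xs. length xs = L \<and> set xs \<subseteq> {1,2,3}}"

definition op_app :: "nat \<Rightarrow> (nat list \<Rightarrow> nat list \<Rightarrow> complex) \<Rightarrow> (nat list \<Rightarrow> complex) \<Rightarrow> (nat list \<Rightarrow> complex)" where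
  "op_app L M v = (\<lambda>is. \<Sum>ks\<in>configs L. M is ks * v ks)"

definition mus :: "nat \<Rightarrow> (nat \<Rightarrow> complex) \<Rightarrow> complex list" where
  "mus L \<mu> = map \<mu> [1..<L+1]"

definition opB where "opB q s \<zeta> L \<mu> lam = mono q s \<zeta> lam (mus L \<mu>) 1 2"
definition opE where "opE q s \<zeta> L \<mu> lam = mono q s \<zeta> lam (mus L \<mu>) 1 3"

text \<open>|0> = e_1^{\<otimes>L}.\<close>
definition vac :: "nat \<Rightarrow> nat list \<Rightarrow> complex" where
  "vac L = (\<lambda>ks. if ks = replicate L 1 then 1 else 0)"

text \<open>F(lam_1..lam_{L-1} | v1, v2) = <0bar| E(lam_{L-1})...E(lam_1) B(v2) B(v1) |0>,
  with <0bar| the dual of e_3^{\<otimes>L}.\<close>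
definition Ffun :: "complex \<Rightarrow> complex \<Rightarrow> complex \<Rightarrow> nat \<Rightarrow> (nat \<Rightarrow> complex) \<Rightarrow> (nat \<Rightarrow> complex) \<Rightarrow> complex \<Rightarrow> complex \<Rightarrow> complex" where
  "Ffun q s \<zeta> L \<mu> lams v1 v2 =
    (let w0 = op_app L (opB q s \<zeta> L \<mu> v2) (op_app L (opB q s \<zeta> L \<mu> v1) (vac L));
         w = foldl (\<lambda>w j. op_app L (opE q s \<zeta> L \<mu> (lams j)) w) w0 [1..<L]
     in w (replicate L 3))"

end

theory Submission
  imports Defs
begin

text \<open>At \<open>exp (2*(v1 - \<mu> j)) = \<zeta>\<close> every entry of the R-matrix in the columns
  \<open>e\<^sub>1\<otimes>e\<^sub>1\<close> and \<open>e\<^sub>2\<otimes>e\<^sub>1\<close> carries the factor \<open>x - \<zeta>\<close>, and by weight conservation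
  the auxiliary row block 3 never meets these columns. So, expanding \<open>\<T>\<^sub>\<alpha>\<^sup>\<beta>(v1)|0\<rangle>\<close>
  with \<open>\<beta> \<noteq> 3\<close> as a sum over paths of auxiliary indices, a path that reaches 3 stays
  there and contributes nothing, while a path avoiding 3 is killed at site \<open>j\<close>.
  Hence \<open>\<B>(v1)|0\<rangle> = 0\<close>, and \<open>\<F>\<close> vanishes by linearity of the remaining operators.\<close>

lemma Rent_row3_vacuum_eq_0:
  assumes "\<gamma> \<in> {1,2}"
  shows "Rent q s \<zeta> lam 3 i \<gamma> 1 = 0"
  using assms unfolding Rent_def Rmat_def Let_def by (elim insertE; simp)

lemma Rent_vacuum_eq_0_at_zeta:
  assumes "\<gamma> \<in> {1,2}" and "exp (2*lam) = \<zeta>"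
  shows "Rent q s \<zeta> lam \<alpha> i \<gamma> 1 = 0"
  using assms(1) unfolding Rent_def Rmat_def Let_def assms(2) by (elim insertE; simp)

lemma mono_row3_vacuum_eq_0:
  assumes "\<beta> \<noteq> 3" and "set ks \<subseteq> {1}"
  shows "mono q s \<zeta> lam ms 3 \<beta> is ks = 0"
  using assms(2)
proof (induction ms arbitrary: "is" ks)
  case Nil
  then show ?case using assms(1) by (cases "is"; cases ks) auto
next
  case (Cons m ms)
  show ?case
  proof (cases "is"; cases ks)
    fix i is' k ks'
    assume "is = i # is'" and ks: "ks = k # ks'"
    moreover have "k = 1" and "set ks' \<subseteq> {1}" using Cons.prems ks by auto
    ultimately show ?thesis using Cons.IH Rent_row3_vacuum_eq_0 by simp
  qed auto
qed

lemma mono_vacuum_eq_0_at_zeta: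
  assumes "m0 \<in> set ms" and "exp (2*(lam - m0)) = \<zeta>"
    and "\<beta> \<noteq> 3" and "set ks \<subseteq> {1}"
  shows "mono q s \<zeta> lam ms \<alpha> \<beta> is ks = 0"
  using assms(1,4)
proof (induction ms arbitrary: \<alpha> "is" ks)
  case Nil
  then show ?case by simp
next
  case (Cons m ms)
  show ?case
  proof (cases "is"; cases ks)
    fix i is' k ks'
    assume is_eq: "is = i # is'" and ks: "ks = k # ks'"
    have k: "k = 1" and ks': "set ks' \<subseteq> {1}" using Cons.prems ks by auto
    have from3: "mono q s \<zeta> lam ms 3 \<beta> is' ks' = 0"
      using mono_row3_vacuum_eq_0 assms(3) ks' by blast
    show ?thesis
    proof (cases "m = m0")
      case True
      then have "Rent q s \<zeta> (lam - m) \<alpha> i \<gamma> 1 = 0" if "\<gamma> \<in> {1,2}" for \<gamma>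
        using Rent_vacuum_eq_0_at_zeta assms(2) that by blast
      then show ?thesis using is_eq ks k from3 by simp
    next
      case False
      then have "m0 \<in> set ms" using Cons.prems by simp
      then have "mono q s \<zeta> lam ms \<gamma> \<beta> is' ks' = 0" for \<gamma>
        using Cons.IH ks' by blast
      then show ?thesis using is_eq ks k by simp
    qed
  qed auto
qed

lemma op_app_zero: "op_app L M (\<lambda>_. 0) = (\<lambda>_. 0)"
  unfolding op_app_def by simp

lemma foldl_op_app_zero: "foldl (\<lambda>w j. op_app L (M j) w) (\<lambda>_. 0) xs = (\<lambda>_. 0)"
  by (induction xs) (simp_all add: op_app_zero)

lemma opB_vacuum_eq_0:
  assumes "j \<in> {1..L}" and "exp (2*v) = exp (2 * \<mu> j) * \<zeta>"
  shows "op_app L (opB q s \<zeta> L \<mu> v) (vac L) = (\<lambda>_. 0)"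
proof -
  have "j \<in> set [1..<L+1]" using assms(1) by auto
  then have "\<mu> j \<in> set (mus L \<mu>)" unfolding mus_def set_map by (rule imageI)
  moreover have "exp (2*(v - \<mu> j)) = \<zeta>"
    using assms(2) by (simp add: right_diff_distrib exp_diff)
  ultimately have "opB q s \<zeta> L \<mu> v is (replicate L 1) = 0" for "is"
    unfolding opB_def by (rule mono_vacuum_eq_0_at_zeta) auto
  then show ?thesis unfolding op_app_def vac_def by (auto intro!: sum.neutral)
qed

theorem lemma2p3:
  fixes q s \<zeta> v1 v2 :: complex and L :: nat and \<mu> lams :: "nat \<Rightarrow> complex"
  assumes "q \<noteq> 0" and "s^2 = q"
    and "\<zeta> = q \<or> \<zeta> = -(q^3)"
    and "L \<ge> 1"
    and "\<exists>j\<in>{1..L}. exp (2*v1) = exp (2 * \<mu> j) * \<zeta>"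
  shows "Ffun q s \<zeta> L \<mu> lams v1 v2 = 0"
proof -
  obtain j where "j \<in> {1..L}" and "exp (2*v1) = exp (2 * \<mu> j) * \<zeta>"
    using assms(5) by blast
  then have B_vacuum: "op_app L (opB q s \<zeta> L \<mu> v1) (vac L) = (\<lambda>_. 0)"
    by (rule opB_vacuum_eq_0)
  show ?thesis unfolding Ffun_def Let_def B_vacuum op_app_zero foldl_op_app_zero by simp
qed

end
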